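(* Let $\mathcal{G}=(\mathcal{V},\mathcal{E})$ be an undirected graph with $\mathcal{V}=\{1,\ldots,n\}$ whose edge set contains all self-loops, and let $\pi$ be a probability distribution on $\mathcal{V}$. Let $\lambda_2^\star$ be the optimal value of $$\min_{P\ge 0}\ \lambda_2(P)\quad\text{s.t.}\quad P(i,j)=0\ \forall (i,j)\notin\mathcal{E},\quad \sum_{j\in\mathcal{V}}P(i,j)=1\ \forall i\in\mathcal{V},\quad \pi(i)P(i,j)=\pi(j)P(j,i)\ \forall (i,j)\in\mathcal{E},$$ and let $\tau_2^\star=\frac{1}{1-\lambda_2^\star}$. Then $$\tau_2^\star\ \ge\ \max_{\mathbf{w}\in\mathbb{R}^n,\ \Psi(1),\ldots,\Psi(n)\in\mathbb{R}^n}\ \sum_{k\in\mathcal{V}}\pi(k)\|\Psi(k)\|^2$$ subject to $$\|\Psi(i)-\Psi(j)\|^2\le w(i)+w(j)\ \ \forall (i,j)\in\mathcal{E},\qquad \sum_{k=1}^n\pi(k)\Psi(k)=\mathbf{0},\qquad \sum_{i=1}^n\pi(i)w(i)=1,$$ where $\|\cdot\|$ is the Euclidean norm. Moreover this bound is tight, i.e. equality holds.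
   Context: For a transition matrix $P$ on $\mathcal{V}$ reversible with respect to $\pi$, its eigenvalues are real and ordered $1=\lambda_1(P)\ge\lambda_2(P)\ge\cdots\ge\lambda_n(P)\ge -1$; $\lambda_2(P)$ denotes the second largest eigenvalue, and the relaxation time is $\tau_2(P)=1/(1-\lambda_2(P))$. Edges are treated as ordered pairs, with $(i,j)\in\mathcal{E}$ iff $(j,i)\in\mathcal{E}$. *)

theory Defs
  imports "HOL-Analysis.Analysis" "HOL-Computational_Algebra.Polynomial"
    "HOL-Library.Multiset" "HOL-Library.Extended_Real"
begin

definition char_poly_vec :: "real^'n^'n \<Rightarrow> real poly" where
  "char_poly_vec A = det (\<chi> i j. (if i = j then [:0, 1:] else 0) - [:A $ i $ j:])"

text \<open>Eigenvalues (real roots of the characteristic polynomial, with multiplicity),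
  listed in non-increasing order; for a reversible transition matrix all eigenvalues are real.\<close>
definition eigs_desc :: "real^'n^'n \<Rightarrow> real list" where
  "eigs_desc A = rev (sorted_list_of_multiset (proots (char_poly_vec A)))"

definition lambda2 :: "real^'n^'n \<Rightarrow> real" where
  "lambda2 A = eigs_desc A ! 1"

definition feasible_P :: "('n \<times> 'n) set \<Rightarrow> ('n \<Rightarrow> real) \<Rightarrow> real^'n^'n \<Rightarrow> bool" where
  "feasible_P E \<pi> P \<longleftrightarrow>
     (\<forall>i j. P $ i $ j \<ge> 0) \<and>
     (\<forall>i j. (i, j) \<notin> E \<longrightarrow> P $ i $ j = 0) \<and>
     (\<forall>i. (\<Sum>j\<in>UNIV. P $ i $ j) = 1) \<and>
     (\<forall>i j. (i, j) \<in> E \<longrightarrow> \<pi> i * P $ i $ j = \<pi> j * P $ j $ i)"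

definition lambda2_star :: "('n::finite \<times> 'n) set \<Rightarrow> ('n \<Rightarrow> real) \<Rightarrow> real" where
  "lambda2_star E \<pi> = Inf {lambda2 P | P. feasible_P E \<pi> P}"

text \<open>tau_2^* = 1/(1 - lambda_2^*), in the extended reals (infinite if lambda_2^* = 1).\<close>
definition tau2_star :: "('n::finite \<times> 'n) set \<Rightarrow> ('n \<Rightarrow> real) \<Rightarrow> ereal" where
  "tau2_star E \<pi> = inverse (ereal (1 - lambda2_star E \<pi>))"

definition feasible_emb :: "('n \<times> 'n) set \<Rightarrow> ('n \<Rightarrow> real) \<Rightarrow> real^'n \<Rightarrow> ('n \<Rightarrow> real^'n) \<Rightarrow> bool" where
  "feasible_emb E \<pi> w \<Psi> \<longleftrightarrow>
     (\<forall>i j. (i, j) \<in> E \<longrightarrow> (norm (\<Psi> i - \<Psi> j))\<^sup>2 \<le> w $ i + w $ j) \<and>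
     (\<Sum>k\<in>UNIV. \<pi> k *\<^sub>R \<Psi> k) = 0 \<and>
     (\<Sum>i\<in>UNIV. \<pi> i * w $ i) = 1"

definition emb_obj :: "('n::finite \<Rightarrow> real) \<Rightarrow> ('n \<Rightarrow> real^'n) \<Rightarrow> real" where
  "emb_obj \<pi> \<Psi> = (\<Sum>k\<in>UNIV. \<pi> k * (norm (\<Psi> k))\<^sup>2)"

end

(* Weak duality is a Poincare inequality. For a reversible chain P the matrix D^(1/2) P D^(-1/2),
   D = diag pi, is symmetric and has an orthonormal eigenbasis containing sqrt pi, so lambda_2(P)
   bounds the Rayleigh quotient of every pi-centred embedding; hence
   2 (1 - lambda_2(P)) sum_k pi_k |Psi_k|^2 <= sum_ij pi_i P_ij |Psi_i - Psi_j|^2 <= 2 sum_i pi_i w_i.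

   Strong duality: normalise the embeddings by sum_k pi_k |Psi_k|^2 = 1 and minimise the cost
   sum_i pi_i w_i instead. If no normalised embedding had cost at most c > 1 - lambda_2^*, a
   hyperplane would separate (0, c) from the convex set of (edge slack, cost) pairs that normalised
   embeddings dominate. Its normal (A, beta) is nonnegative, supported on E and has degrees
   beta pi_k, so P = (A + A^T) / (beta pi) is feasible, and testing the hyperplane on an eigenvector
   of lambda_2(P) gives c <= 1 - lambda_2(P) <= 1 - lambda_2^*. By compactness the optimal cost
   1 - lambda_2^* is attained, and rescaling gives a feasible embedding of value tau_2^*. *)

theory Submission
  imports Defs
begin

section \<open>Diagonalisable and symmetric matrices\<close>

lemma const_poly_sum: "finite A \<Longrightarrow> [:sum f A:] = (\<Sum>x\<in>A. [:f x:])"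
proof (induction A rule: finite_induct)
  case (insert x F)
  have "[:f x + sum f F:] = [:f x:] + [:sum f F:]" by simp
  with insert show ?case by simp
qed simp

lemma const_poly_mult: "[:a * b:] = [:a:] * [:b::'a::comm_ring_1:]"
  by simp

lemma const_poly_prod: "finite A \<Longrightarrow> [:prod f A:] = (\<Prod>x\<in>A. [:(f x)::'a::comm_ring_1:])"
  by (induction A rule: finite_induct) (auto simp: const_poly_mult simp del: pCons_0_0)

lemma det_const_poly:
  fixes A :: "'a::comm_ring_1^'n^'n"
  shows "det (\<chi> i j. [:A$i$j:]) = [:det A:]"
proof -
  have fin: "finite {p. p permutes (UNIV :: 'n set)}" by (simp add: finite_permutations)
  show ?thesis
    unfolding det_def const_poly_sum[OF fin]
    by (intro sum.cong) (simp_all add: const_poly_mult const_poly_prod of_int_poly del: pCons_0_0)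
qed

lemma char_poly_vec_diagonalizable:
  fixes P V :: "real^'n^'n" and \<mu> :: "'n \<Rightarrow> real"
  assumes "invertible V" and eigen: "\<And>i k. (P ** V)$i$k = \<mu> k * V$i$k"
  shows "char_poly_vec P = (\<Prod>k\<in>UNIV. [:- \<mu> k, 1:])"
proof -
  define XP where "XP = (\<chi> i j. (if i = j then [:0, 1:] else 0) - [:P $ i $ j:])"
  define Vp where "Vp = (\<chi> i j. [:V$i$j:])"
  define D where "D = (\<chi> i j. if i = j then [:- \<mu> i, 1:] else (0::real poly))"
  have "(XP ** Vp)$i$k = (Vp ** D)$i$k" for i k
  proof -
    have "(XP ** Vp)$i$k = (\<Sum>j\<in>UNIV. ((if i = j then [:0, 1:] else 0) - [:P$i$j:]) * [:V$j$k:])"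
      by (simp add: XP_def Vp_def matrix_matrix_mult_def)
    also have "\<dots> = (\<Sum>j\<in>UNIV. (if i = j then [:0, 1:] * [:V$j$k:] else 0) - [:P$i$j * V$j$k:])"
      by (intro sum.cong)
         (auto simp: left_diff_distrib const_poly_mult simp del: pCons_0_0 mult_pCons_left mult_pCons_right)
    also have "\<dots> = [:0, 1:] * [:V$i$k:] - [:(P ** V)$i$k:]"
      by (simp add: sum_subtractf const_poly_sum matrix_matrix_mult_def)
    also have "\<dots> = [:V$i$k:] * [:- \<mu> k, 1:]"
      by (simp add: eigen algebra_simps)
    also have "\<dots> = (Vp ** D)$i$k"
      by (simp add: Vp_def D_def matrix_matrix_mult_def if_distrib algebra_simps cong: if_cong)
    finally show ?thesis .
  qed
  hence "XP ** Vp = Vp ** D" by (simp add: vec_eq_iff)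
  hence "det XP * det Vp = det Vp * det D" by (metis det_mul)
  moreover have "det Vp \<noteq> 0"
    using assms(1) by (simp add: Vp_def det_const_poly invertible_det_nz)
  ultimately have "det XP = det D" by simp
  thus ?thesis by (simp add: char_poly_vec_def XP_def det_diagonal D_def)
qed

lemma linear_le_quadratic_imp_zero:
  fixes a b :: real
  assumes "\<And>t. 2 * t * a \<le> t\<^sup>2 * b"
  shows "a = 0"
proof (rule ccontr)
  assume "a \<noteq> 0"
  define s where "s = 1 / (\<bar>b\<bar> + 1)"
  have s: "s > 0" "s * b < 1"
    by (auto simp: s_def field_simps abs_if)
  have "2 * (s * a) * a \<le> (s * a)\<^sup>2 * b" by (rule assms)
  hence "(s * a\<^sup>2) * 2 \<le> (s * a\<^sup>2) * (s * b)" by (simp add: power2_eq_square algebra_simps)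
  moreover have "s * a\<^sup>2 > 0" using s \<open>a \<noteq> 0\<close> by simp
  ultimately have "2 \<le> s * b" by (metis mult_le_cancel_left_pos)
  with s show False by simp
qed

lemma symmetric_matrix_inner:
  fixes A :: "real^'n^'n"
  assumes "transpose A = A"
  shows "x \<bullet> (A *v y) = (A *v x) \<bullet> y"
  by (metis assms dot_lmul_matrix vector_transpose_matrix)

text \<open>The first-order condition at a maximiser of the Rayleigh quotient on an invariant subspace
  kills every component of \<open>A u\<close> orthogonal to \<open>u\<close>.\<close>
lemma rayleigh_maximizer_eigenvector:
  fixes A :: "real^'n^'n"
  assumes sym: "transpose A = A" and W: "subspace W" and inv: "\<And>x. x \<in> W \<Longrightarrow> A *v x \<in> W"
    and uW: "u \<in> W" and uu: "u \<bullet> u = 1"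
    and max: "\<And>y. y \<in> W \<Longrightarrow> y \<bullet> (A *v y) \<le> (u \<bullet> (A *v u)) * (y \<bullet> y)"
  shows "A *v u = (u \<bullet> (A *v u)) *\<^sub>R u"
proof -
  define \<mu> where "\<mu> = u \<bullet> (A *v u)"
  have orth: "v \<bullet> (A *v u) = 0" if "v \<in> W" "v \<bullet> u = 0" for v
  proof (rule linear_le_quadratic_imp_zero)
    fix t :: real
    have "u + t *\<^sub>R v \<in> W" using that uW W by (simp add: subspace_add subspace_scale)
    from max[OF this]
    show "2 * t * (v \<bullet> (A *v u)) \<le> t\<^sup>2 * (\<mu> * (v \<bullet> v) - v \<bullet> (A *v v))"
      using symmetric_matrix_inner[OF sym, of u v] uu that(2)
      by (simp add: \<mu>_def power2_eq_square inner_commute algebra_simps)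
  qed
  define v where "v = A *v u - \<mu> *\<^sub>R u"
  have "v \<in> W" using uW inv W by (simp add: v_def subspace_diff subspace_scale)
  moreover have "v \<bullet> u = 0"
  proof -
    have "u \<bullet> v = 0" using uu by (simp add: v_def \<mu>_def inner_diff_right)
    thus ?thesis by (simp add: inner_commute)
  qed
  ultimately have "v \<bullet> v = 0"
    using orth by (simp add: v_def inner_diff_right)
  thus ?thesis by (simp add: v_def \<mu>_def)
qed

lemma symmetric_matrix_eigenvector_in_subspace:
  fixes A :: "real^'n^'n"
  assumes sym: "transpose A = A" and W: "subspace W" "W \<noteq> {0}"
    and inv: "\<And>x. x \<in> W \<Longrightarrow> A *v x \<in> W"
  obtains u where "u \<in> W" "norm u = 1" "A *v u = (u \<bullet> (A *v u)) *\<^sub>R u"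
proof -
  obtain x where x: "x \<in> W" "x \<noteq> 0" using W subspace_0 by blast
  define S where "S = W \<inter> sphere 0 1"
  have "x /\<^sub>R norm x \<in> S" using x W by (simp add: S_def subspace_scale)
  moreover have "compact S"
    unfolding S_def by (intro closed_Int_compact closed_subspace W compact_sphere)
  moreover have "continuous_on S (\<lambda>x. x \<bullet> (A *v x))"
    by (intro continuous_intros linear_continuous_on matrix_vector_mul_linear)
  ultimately obtain u where uS: "u \<in> S" and umax: "\<And>y. y \<in> S \<Longrightarrow> y \<bullet> (A *v y) \<le> u \<bullet> (A *v u)"
    using continuous_attains_sup[of S "\<lambda>x. x \<bullet> (A *v x)"] by blast
  have uW: "u \<in> W" and nu: "norm u = 1" using uS by (auto simp: S_def)
  have "y \<bullet> (A *v y) \<le> (u \<bullet> (A *v u)) * (y \<bullet> y)" if "y \<in> W" for y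
  proof (cases "y = 0")
    case False
    have "y /\<^sub>R norm y \<in> S" using that False W by (simp add: S_def subspace_scale)
    hence "(y /\<^sub>R norm y) \<bullet> (A *v (y /\<^sub>R norm y)) \<le> u \<bullet> (A *v u)" by (rule umax)
    hence "y \<bullet> (A *v y) / (norm y)\<^sup>2 \<le> u \<bullet> (A *v u)"
      by (simp add: matrix_vector_mult_scaleR power2_eq_square divide_inverse mult_ac)
    thus ?thesis using False by (simp add: field_simps power2_norm_eq_inner)
  qed simp
  with uW nu show thesis
    using rayleigh_maximizer_eigenvector[OF sym W(1) inv uW] that by (simp add: norm_eq_1)
qed

lemma span_insert_if_orthogonal_part:
  assumes "y - (u \<bullet> y) *\<^sub>R u \<in> span B"
  shows "y \<in> span (insert u B)"
proof -
  have "y - (u \<bullet> y) *\<^sub>R u + (u \<bullet> y) *\<^sub>R u \<in> span (insert u B)"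
    using assms span_mono[of B "insert u B"] by (meson span_add span_base span_scale insertI1 subset_insertI subsetD)
  thus ?thesis by simp
qed

lemma symmetric_matrix_orthonormal_eigenbasis:
  fixes A :: "real^'n^'n"
  assumes sym: "transpose A = A"
  shows "subspace W \<Longrightarrow> (\<And>x. x \<in> W \<Longrightarrow> A *v x \<in> W) \<Longrightarrow>
    \<exists>B. B \<subseteq> W \<and> finite B \<and> pairwise orthogonal B \<and>
        (\<forall>u\<in>B. norm u = 1 \<and> A *v u = (u \<bullet> (A *v u)) *\<^sub>R u) \<and> span B = W"
proof (induction "dim W" arbitrary: W rule: less_induct)
  case less
  show ?case
  proof (cases "W = {0}")
    case True
    then show ?thesis by (intro exI[of _ "{}"]) auto
  next
    case False
    then obtain u where uW: "u \<in> W" and nu: "norm u = 1" and eig: "A *v u = (u \<bullet> (A *v u)) *\<^sub>R u"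
      using symmetric_matrix_eigenvector_in_subspace[OF sym less.prems(1) False less.prems(2)] by blast
    have uu: "u \<bullet> u = 1" using nu by (simp add: norm_eq_1)
    define W' where "W' = W \<inter> {y. orthogonal u y}"
    have sW': "subspace W'"
      unfolding W'_def by (intro subspace_inter less.prems subspace_orthogonal_to_vector)
    have iW': "A *v y \<in> W'" if "y \<in> W'" for y
    proof -
      have "u \<bullet> (A *v y) = (A *v u) \<bullet> y" by (rule symmetric_matrix_inner[OF sym])
      also have "\<dots> = (u \<bullet> (A *v u)) * (u \<bullet> y)" by (metis eig inner_scaleR_left)
      finally have "u \<bullet> (A *v y) = (u \<bullet> (A *v u)) * (u \<bullet> y)" .
      with that less.prems(2) show ?thesis by (auto simp: W'_def orthogonal_def)
    qed
    have "u \<notin> W'" using uu by (simp add: W'_def orthogonal_def)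
    hence "W' \<subset> W" using uW by (auto simp: W'_def)
    hence "dim W' < dim W"
      using sW' less.prems(1) by (metis dim_psubset span_eq_iff)
    from less.hyps[OF this sW' iW'] obtain B' where B':
      "B' \<subseteq> W'" "finite B'" "pairwise orthogonal B'"
      "\<forall>u\<in>B'. norm u = 1 \<and> A *v u = (u \<bullet> (A *v u)) *\<^sub>R u" "span B' = W'" by blast
    have "W \<subseteq> span (insert u B')"
    proof
      fix y assume "y \<in> W"
      hence "y - (u \<bullet> y) *\<^sub>R u \<in> W'" using uW uu less.prems(1)
        by (simp add: W'_def orthogonal_def inner_diff_right subspace_diff subspace_scale)
      thus "y \<in> span (insert u B')" using B'(5) span_insert_if_orthogonal_part by metis
    qed
    moreover have "span (insert u B') \<subseteq> W"
      using B'(1) uW less.prems(1) by (intro span_minimal) (auto simp: W'_def)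
    moreover have "pairwise orthogonal (insert u B')"
      using B'(1,3) unfolding pairwise_insert by (auto simp: W'_def orthogonal_commute)
    ultimately show ?thesis
      using B' uW nu eig by (intro exI[of _ "insert u B'"]) (auto simp: W'_def)
  qed
qed

lemma orthonormal_basis_indexed:
  fixes B :: "(real^'n) set"
  assumes finB: "finite B" and orthB: "pairwise orthogonal B" and unitB: "\<And>u. u \<in> B \<Longrightarrow> norm u = 1"
    and spanB: "span B = UNIV"
  obtains b :: "'n \<Rightarrow> real^'n" where "bij_betw b UNIV B"
    "\<And>k l. b k \<bullet> b l = (if k = l then 1 else 0)" "\<And>y. (\<Sum>k\<in>UNIV. (y \<bullet> b k) *\<^sub>R b k) = y"
proof -
  have "independent B"
    using orthB unitB by (intro pairwise_orthogonal_independent) (auto dest: unitB)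
  hence "card B = CARD('n)"
    using dim_span_eq_card_independent[of B] spanB by simp
  then obtain b where bij: "bij_betw b (UNIV :: 'n set) B"
    using finite_same_card_bij[of "UNIV :: 'n set" B] finB by auto
  have bB: "b k \<in> B" for k using bij by (auto simp: bij_betw_def)
  have "b k \<bullet> b l = (if k = l then 1 else 0)" for k l
  proof (cases "k = l")
    case True
    then show ?thesis using unitB[OF bB] by (simp add: norm_eq_1)
  next
    case False
    hence "b k \<noteq> b l" using bij by (metis bij_betw_imp_inj_on inj_on_contraD UNIV_I)
    then show ?thesis using pairwiseD[OF orthB bB bB] False by (simp add: orthogonal_def)
  qed
  moreover have "(\<Sum>k\<in>UNIV. (y \<bullet> b k) *\<^sub>R b k) = y" for y
  proof -
    have "(\<Sum>u\<in>B. (y \<bullet> u) *\<^sub>R u) = y"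
      using orthonormal_basis_expand[OF orthB unitB _ finB] spanB by blast
    thus ?thesis using sum.reindex_bij_betw[OF bij, of "\<lambda>u. (y \<bullet> u) *\<^sub>R u"] by simp
  qed
  ultimately show thesis using that bij by blast
qed

section \<open>The second eigenvalue of a reversible chain\<close>

lemma Compl_singleton_nonempty:
  assumes "CARD('n::finite) \<ge> 2"
  shows "- {k :: 'n} \<noteq> {}"
proof
  assume "- {k} = {}"
  hence "(UNIV :: 'n set) = {k}" by auto
  hence "CARD('n) = card {k}" by (simp only:)
  with assms show False by simp
qed

lemma second_largest_add_mset:
  fixes M :: "'a::linorder multiset"
  assumes "M \<noteq> {#}" and le: "\<And>x. x \<in># M \<Longrightarrow> x \<le> a"
  shows "rev (sorted_list_of_multiset (add_mset a M)) ! 1 = Max_mset M"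
proof -
  define xs where "xs = sorted_list_of_multiset M"
  have xs: "sorted xs" "xs \<noteq> []" "set xs = set_mset M"
    using assms(1) by (auto simp: xs_def) (metis mset.simps(1) mset_sorted_list_of_multiset)
  have "sorted_list_of_multiset (add_mset a M) = xs @ [a]"
    using le by (simp add: xs_def sorted_insort_is_snoc)
  hence "rev (sorted_list_of_multiset (add_mset a M)) ! 1 = last xs"
    using xs(2) by (simp add: hd_conv_nth[symmetric] hd_rev)
  also have "last xs = Max (set xs)"
  proof (rule Max_eqI[symmetric])
    fix y assume "y \<in> set xs"
    then obtain i where "i < length xs" "y = xs ! i" by (auto simp: in_set_conv_nth)
    then show "y \<le> last xs" using xs(1,2) by (simp add: last_conv_nth sorted_nth_mono)
  qed (use xs(2) in auto)
  finally show ?thesis using xs(3) by simp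
qed

locale reversible_chain =
  fixes \<pi> :: "'n::finite \<Rightarrow> real" and P :: "real^'n^'n"
  assumes pi_pos: "\<And>i. 0 < \<pi> i" and pi_sum: "(\<Sum>i\<in>UNIV. \<pi> i) = 1"
    and P_nonneg: "\<And>i j. 0 \<le> P$i$j" and P_row_sum: "\<And>i. (\<Sum>j\<in>UNIV. P$i$j) = 1"
    and P_reversible: "\<And>i j. \<pi> i * P$i$j = \<pi> j * P$j$i"
begin

lemma sum_flow_source: "(\<Sum>i\<in>UNIV. \<Sum>j\<in>UNIV. \<pi> i * P$i$j * a i) = (\<Sum>i\<in>UNIV. \<pi> i * a i)"
  by (simp add: sum_distrib_left[symmetric] sum_distrib_right[symmetric] P_row_sum mult_ac)

lemma sum_flow_target: "(\<Sum>i\<in>UNIV. \<Sum>j\<in>UNIV. \<pi> i * P$i$j * a j) = (\<Sum>j\<in>UNIV. \<pi> j * a j)"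
  by (subst sum.swap) (simp add: P_reversible sum_distrib_left[symmetric] sum_distrib_right[symmetric]
      P_row_sum mult_ac)

lemma abs_quadratic_form_le:
  "\<bar>\<Sum>i\<in>UNIV. \<Sum>j\<in>UNIV. \<pi> i * P$i$j * g i * g j\<bar> \<le> (\<Sum>i\<in>UNIV. \<pi> i * (g i)\<^sup>2)"
proof -
  have "\<bar>\<Sum>i\<in>UNIV. \<Sum>j\<in>UNIV. \<pi> i * P$i$j * g i * g j\<bar> \<le> (\<Sum>i\<in>UNIV. \<Sum>j\<in>UNIV. \<bar>\<pi> i * P$i$j * g i * g j\<bar>)"
    by (rule order_trans[OF sum_abs]) (intro sum_mono sum_abs)
  also have "\<dots> \<le> (\<Sum>i\<in>UNIV. \<Sum>j\<in>UNIV. \<pi> i * P$i$j * (g i)\<^sup>2 / 2 + \<pi> i * P$i$j * (g j)\<^sup>2 / 2)"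
  proof (intro sum_mono)
    fix i j
    have nonneg: "0 \<le> \<pi> i * P$i$j" using pi_pos[of i] P_nonneg[of i j] by simp
    have "\<bar>g i * g j\<bar> \<le> ((g i)\<^sup>2 + (g j)\<^sup>2) / 2"
      using sum_squares_bound[of "\<bar>g i\<bar>" "\<bar>g j\<bar>"] by (simp add: abs_mult)
    hence "(\<pi> i * P$i$j) * \<bar>g i * g j\<bar> \<le> (\<pi> i * P$i$j) * (((g i)\<^sup>2 + (g j)\<^sup>2) / 2)"
      using nonneg by (rule mult_left_mono)
    then show "\<bar>\<pi> i * P$i$j * g i * g j\<bar> \<le> \<pi> i * P$i$j * (g i)\<^sup>2 / 2 + \<pi> i * P$i$j * (g j)\<^sup>2 / 2"
      using nonneg by (simp add: abs_mult abs_of_pos[OF pi_pos] abs_of_nonneg[OF P_nonneg] mult.assoc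
          add_divide_distrib distrib_left)
  qed
  also have "\<dots> = (\<Sum>i\<in>UNIV. \<pi> i * (g i)\<^sup>2)"
    using sum_flow_source[of "\<lambda>i. (g i)\<^sup>2 / 2"] sum_flow_target[of "\<lambda>i. (g i)\<^sup>2 / 2"]
    by (simp add: sum.distrib sum_divide_distrib[symmetric] mult.assoc)
  finally show ?thesis .
qed

text \<open>\<open>sym_P\<close> is the similarity transform \<open>D^(1/2) P D^(-1/2)\<close>, \<open>D = diag \<pi>\<close>, and
  \<open>weighted\<close> carries the \<open>\<pi>\<close>-weighted inner product of functions to the standard one.
  \<open>sqrt_pi\<close> is a constant of its own so that the simplifier does not turn
  \<open>sqrt_pi i * sqrt_pi i\<close> into \<open>\<bar>\<pi> i\<bar>\<close>.\<close>
definition sqrt_pi :: "'n \<Rightarrow> real" where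
  "sqrt_pi i = sqrt (\<pi> i)"

definition sym_P :: "real^'n^'n" where
  "sym_P = (\<chi> i j. sqrt_pi i * P$i$j / sqrt_pi j)"

definition weighted :: "('n \<Rightarrow> real) \<Rightarrow> real^'n" where
  "weighted g = (\<chi> i. sqrt_pi i * g i)"

lemma sqrt_pi_pos: "0 < sqrt_pi i"
  using pi_pos[of i] by (simp add: sqrt_pi_def)

lemma sqrt_pi_nonzero [simp]: "sqrt_pi i \<noteq> 0"
  using sqrt_pi_pos[of i] by simp

lemma sqrt_pi_mult_self [simp]: "sqrt_pi i * sqrt_pi i = \<pi> i"
  using pi_pos[of i] by (simp add: sqrt_pi_def)

lemma weighted_unweight: "weighted (\<lambda>i. y$i / sqrt_pi i) = y"
  by (simp add: weighted_def vec_eq_iff)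

lemma inner_weighted: "weighted g \<bullet> weighted h = (\<Sum>i\<in>UNIV. \<pi> i * g i * h i)"
  unfolding weighted_def inner_vec_def by (intro sum.cong refl) (simp flip: sqrt_pi_mult_self)

lemma inner_weighted_sym_P:
  "weighted g \<bullet> (sym_P *v weighted h) = (\<Sum>i\<in>UNIV. \<Sum>j\<in>UNIV. \<pi> i * P$i$j * g i * h j)"
proof -
  have "weighted g \<bullet> (sym_P *v weighted h) = (\<Sum>i\<in>UNIV. \<Sum>j\<in>UNIV.
      sqrt_pi i * g i * (sqrt_pi i * P$i$j / sqrt_pi j * (sqrt_pi j * h j)))"
    by (simp add: weighted_def sym_P_def inner_vec_def matrix_vector_mult_def sum_distrib_left)
  also have "\<dots> = (\<Sum>i\<in>UNIV. \<Sum>j\<in>UNIV. \<pi> i * P$i$j * g i * h j)"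
    by (intro sum.cong refl) (simp flip: sqrt_pi_mult_self)
  finally show ?thesis .
qed

lemma transpose_sym_P: "transpose sym_P = sym_P"
proof -
  have "sqrt_pi i * P$i$j / sqrt_pi j = sqrt_pi j * P$j$i / sqrt_pi i" for i j
    using P_reversible[of i j] by (simp add: field_simps flip: sqrt_pi_mult_self)
  then show ?thesis by (simp add: transpose_def sym_P_def vec_eq_iff)
qed

lemma sym_P_weighted_one: "sym_P *v weighted (\<lambda>_. 1) = weighted (\<lambda>_. 1)"
proof -
  have "(\<Sum>j\<in>UNIV. sqrt_pi i * P$i$j) = sqrt_pi i" for i
    by (simp add: P_row_sum flip: sum_distrib_left)
  then show ?thesis by (simp add: sym_P_def weighted_def matrix_vector_mult_def vec_eq_iff)
qed

lemma norm_weighted_one: "norm (weighted (\<lambda>_. 1)) = 1"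
  using inner_weighted[of "\<lambda>_. 1" "\<lambda>_. 1"] by (simp add: pi_sum norm_eq_1)

lemma sym_P_eigenbasis:
  obtains b :: "'n \<Rightarrow> real^'n" and \<mu> k0 where
    "\<And>k l. b k \<bullet> b l = (if k = l then 1 else 0)" "\<And>k. sym_P *v b k = \<mu> k *\<^sub>R b k"
    "b k0 = weighted (\<lambda>_. 1)" "\<And>y. (\<Sum>k\<in>UNIV. (y \<bullet> b k) *\<^sub>R b k) = y"
proof -
  define s where "s = weighted (\<lambda>_. 1)"
  define W where "W = {y. orthogonal s y}"
  have W_inv: "sym_P *v y \<in> W" if "y \<in> W" for y
  proof -
    have "s \<bullet> (sym_P *v y) = (sym_P *v s) \<bullet> y"
      by (rule symmetric_matrix_inner[OF transpose_sym_P])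
    with that show ?thesis by (simp add: W_def orthogonal_def s_def sym_P_weighted_one)
  qed
  obtain B' where B': "B' \<subseteq> W" "finite B'" "pairwise orthogonal B'"
    "\<forall>u\<in>B'. norm u = 1 \<and> sym_P *v u = (u \<bullet> (sym_P *v u)) *\<^sub>R u" "span B' = W"
    using symmetric_matrix_orthonormal_eigenbasis[OF transpose_sym_P
        subspace_orthogonal_to_vector[of s, folded W_def] W_inv]
    unfolding W_def by blast
  have ss: "s \<bullet> s = 1" using norm_weighted_one by (simp add: s_def norm_eq_1)
  define B where "B = insert s B'"
  have orthB: "pairwise orthogonal B"
    using B'(1,3) unfolding B_def pairwise_insert by (auto simp: W_def orthogonal_commute)
  have unitB: "\<And>u. u \<in> B \<Longrightarrow> norm u = 1"
    and eigB: "\<And>u. u \<in> B \<Longrightarrow> sym_P *v u = (u \<bullet> (sym_P *v u)) *\<^sub>R u"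
    using B'(4) ss sym_P_weighted_one by (auto simp: B_def s_def norm_eq_1)
  have "y \<in> span B" for y
  proof -
    have "y - (s \<bullet> y) *\<^sub>R s \<in> W" using ss by (simp add: W_def orthogonal_def inner_diff_right)
    thus ?thesis using B'(5) span_insert_if_orthogonal_part by (metis B_def)
  qed
  hence "span B = UNIV" by auto
  moreover have "finite B" using B'(2) by (simp add: B_def)
  ultimately obtain b :: "'n \<Rightarrow> real^'n" where bij: "bij_betw b UNIV B"
    and orthonormal: "\<And>k l. b k \<bullet> b l = (if k = l then 1 else 0)"
    and expand: "\<And>y. (\<Sum>k\<in>UNIV. (y \<bullet> b k) *\<^sub>R b k) = y"
    using orthonormal_basis_indexed[OF _ orthB unitB] by blast
  have bB: "b k \<in> B" for k using bij by (auto simp: bij_betw_def)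
  have "s \<in> range b" using bij by (simp add: bij_betw_def B_def)
  then obtain k0 where k0: "b k0 = weighted (\<lambda>_. 1)" by (auto simp: s_def)
  show thesis
  proof (rule that[of b "\<lambda>k. b k \<bullet> (sym_P *v b k)" k0])
    show "sym_P *v b k = (b k \<bullet> (sym_P *v b k)) *\<^sub>R b k" for k by (rule eigB[OF bB])
  qed (fact orthonormal k0 expand)+
qed

lemma char_poly_P_eigenbasis:
  fixes b :: "'n \<Rightarrow> real^'n"
  assumes orth: "\<And>k l. b k \<bullet> b l = (if k = l then 1 else 0)"
    and eig: "\<And>k. sym_P *v b k = \<mu> k *\<^sub>R b k"
  shows "char_poly_vec P = (\<Prod>k\<in>UNIV. [:- \<mu> k, 1:])"
proof -
  define V :: "real^'n^'n" where "V = (\<chi> i k. b k $ i / sqrt_pi i)"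
  have "(\<chi> k i. b k $ i * sqrt_pi i) ** V = mat 1"
    using orth by (simp add: V_def matrix_matrix_mult_def mat_def vec_eq_iff inner_vec_def)
  then have "invertible V" by (auto simp: invertible_left_inverse)
  moreover have "(P ** V)$i$k = \<mu> k * V$i$k" for i k
  proof -
    have "sqrt_pi i * (P ** V)$i$k = (sym_P *v b k)$i"
      by (simp add: V_def sym_P_def matrix_matrix_mult_def matrix_vector_mult_def sum_distrib_left
          mult_ac)
    also have "\<dots> = sqrt_pi i * (\<mu> k * V$i$k)" by (simp add: eig V_def)
    finally show ?thesis by simp
  qed
  ultimately show ?thesis by (rule char_poly_vec_diagonalizable)
qed

lemma eigenvalue_abs_le_1:
  assumes "b \<bullet> b = 1" and "sym_P *v b = \<mu> *\<^sub>R b"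
  shows "\<bar>\<mu>\<bar> \<le> 1"
proof -
  define g where "g = (\<lambda>i. b $ i / sqrt_pi i)"
  have b: "weighted g = b" unfolding g_def by (rule weighted_unweight)
  have "\<mu> = weighted g \<bullet> (sym_P *v weighted g)"
    using assms by (simp add: b)
  also have "\<dots> = (\<Sum>i\<in>UNIV. \<Sum>j\<in>UNIV. \<pi> i * P$i$j * g i * g j)"
    by (rule inner_weighted_sym_P)
  finally have "\<bar>\<mu>\<bar> \<le> (\<Sum>i\<in>UNIV. \<pi> i * (g i)\<^sup>2)"
    using abs_quadratic_form_le by simp
  also have "\<dots> = weighted g \<bullet> weighted g"
    by (simp add: inner_weighted power2_eq_square mult.assoc)
  finally show ?thesis using assms(1) by (simp add: b)
qed

lemma lambda2_eq_Max:
  fixes b :: "'n \<Rightarrow> real^'n"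
  assumes "CARD('n) \<ge> 2"
    and orth: "\<And>k l. b k \<bullet> b l = (if k = l then 1 else 0)"
    and eig: "\<And>k. sym_P *v b k = \<mu> k *\<^sub>R b k" and k0: "b k0 = weighted (\<lambda>_. 1)"
  shows "lambda2 P = Max (\<mu> ` (- {k0}))"
proof -
  have "\<mu> k0 = b k0 \<bullet> (sym_P *v b k0)" using eig orth by simp
  also have "\<dots> = 1" using k0 orth[of k0 k0] by (simp add: sym_P_weighted_one)
  finally have \<mu>0: "\<mu> k0 = 1" .
  have le1: "\<mu> k \<le> 1" for k
    using eigenvalue_abs_le_1[OF _ eig] orth[of k k] by (simp add: abs_le_iff)
  define M where "M = (\<Sum>k\<in>- {k0}. {#\<mu> k#})"
  have "proots (char_poly_vec P) = (\<Sum>k\<in>UNIV. {#\<mu> k#})"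
    by (simp add: char_poly_P_eigenbasis[OF orth eig] proots_prod)
  also have "\<dots> = add_mset 1 M"
    by (simp add: M_def \<mu>0 sum.remove[of UNIV k0] Compl_eq_Diff_UNIV)
  finally have proots: "proots (char_poly_vec P) = add_mset 1 M" .
  have setM: "set_mset M = \<mu> ` (- {k0})" by (auto simp: M_def set_mset_sum)
  have "M \<noteq> {#}" using setM Compl_singleton_nonempty[OF assms(1)] by auto
  hence "lambda2 P = Max_mset M"
    unfolding lambda2_def eigs_desc_def proots
    by (rule second_largest_add_mset) (use setM le1 in auto)
  with setM show ?thesis by simp
qed

lemma lambda2_variational:
  assumes "CARD('n) \<ge> 2" and mean: "(\<Sum>i\<in>UNIV. \<pi> i * g i) = 0"
  shows "(\<Sum>i\<in>UNIV. \<Sum>j\<in>UNIV. \<pi> i * P$i$j * g i * g j) \<le> lambda2 P * (\<Sum>i\<in>UNIV. \<pi> i * (g i)\<^sup>2)"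
proof -
  obtain b :: "'n \<Rightarrow> real^'n" and \<mu> k0 where orth: "\<And>k l. b k \<bullet> b l = (if k = l then 1 else 0)"
    and eig: "\<And>k. sym_P *v b k = \<mu> k *\<^sub>R b k" and k0: "b k0 = weighted (\<lambda>_. 1)"
    and expand: "\<And>y. (\<Sum>k\<in>UNIV. (y \<bullet> b k) *\<^sub>R b k) = y"
    using sym_P_eigenbasis by blast
  have lam: "lambda2 P = Max (\<mu> ` (- {k0}))" by (rule lambda2_eq_Max[OF assms(1) orth eig k0])
  define y where "y = weighted g"
  define c where "c k = y \<bullet> b k" for k
  have "c k0 = 0" using mean by (simp add: c_def y_def k0 inner_weighted inner_commute)
  have "sym_P *v y = (\<Sum>k\<in>UNIV. c k *\<^sub>R (sym_P *v b k))"
    by (subst expand[of y, symmetric])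
       (simp add: c_def linear_sum[OF matrix_vector_mul_linear] matrix_vector_mult_scaleR)
  hence Sy: "y \<bullet> (sym_P *v y) = (\<Sum>k\<in>UNIV. \<mu> k * (c k)\<^sup>2)"
    by (simp add: eig inner_sum_right c_def power2_eq_square mult_ac)
  have "y \<bullet> y = y \<bullet> (\<Sum>k\<in>UNIV. c k *\<^sub>R b k)" using expand[of y] by (simp add: c_def)
  hence yy: "y \<bullet> y = (\<Sum>k\<in>UNIV. (c k)\<^sup>2)" by (simp add: inner_sum_right c_def power2_eq_square)
  have "(\<Sum>i\<in>UNIV. \<Sum>j\<in>UNIV. \<pi> i * P$i$j * g i * g j) = y \<bullet> (sym_P *v y)"
    unfolding y_def by (rule inner_weighted_sym_P[symmetric])
  also have "\<dots> \<le> (\<Sum>k\<in>UNIV. lambda2 P * (c k)\<^sup>2)"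
    unfolding Sy
  proof (rule sum_mono)
    fix k
    show "\<mu> k * (c k)\<^sup>2 \<le> lambda2 P * (c k)\<^sup>2"
    proof (cases "k = k0")
      case False
      hence "\<mu> k \<le> lambda2 P" unfolding lam by (intro Max_ge) auto
      thus ?thesis by (simp add: mult_right_mono)
    qed (simp add: \<open>c k0 = 0\<close>)
  qed
  also have "\<dots> = lambda2 P * (y \<bullet> y)" by (simp add: yy sum_distrib_left)
  also have "y \<bullet> y = (\<Sum>i\<in>UNIV. \<pi> i * (g i)\<^sup>2)"
    unfolding y_def inner_weighted by (simp add: power2_eq_square mult.assoc)
  finally show ?thesis .
qed

lemma lambda2_attained:
  assumes "CARD('n) \<ge> 2"
  obtains f where "(\<Sum>i\<in>UNIV. \<pi> i * f i) = 0" "(\<Sum>i\<in>UNIV. \<pi> i * (f i)\<^sup>2) = 1"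
    "(\<Sum>i\<in>UNIV. \<Sum>j\<in>UNIV. \<pi> i * P$i$j * f i * f j) = lambda2 P"
proof -
  obtain b :: "'n \<Rightarrow> real^'n" and \<mu> k0 where orth: "\<And>k l. b k \<bullet> b l = (if k = l then 1 else 0)"
    and eig: "\<And>k. sym_P *v b k = \<mu> k *\<^sub>R b k" and k0: "b k0 = weighted (\<lambda>_. 1)"
    and "\<And>y. (\<Sum>k\<in>UNIV. (y \<bullet> b k) *\<^sub>R b k) = y"
    using sym_P_eigenbasis by blast
  have "lambda2 P \<in> \<mu> ` (- {k0})"
    unfolding lambda2_eq_Max[OF assms orth eig k0]
    using Compl_singleton_nonempty[OF assms] by (intro Max_in) auto
  then obtain k1 where "k1 \<noteq> k0" "\<mu> k1 = lambda2 P" by (metis ComplD imageE singletonI)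
  define f where "f = (\<lambda>i. b k1 $ i / sqrt_pi i)"
  have b1: "weighted f = b k1" unfolding f_def by (rule weighted_unweight)
  show thesis
  proof (rule that[of f])
    show "(\<Sum>i\<in>UNIV. \<pi> i * f i) = 0"
      using inner_weighted[of "\<lambda>_. 1" f] orth[of k0 k1] \<open>k1 \<noteq> k0\<close> by (simp add: b1 k0)
    show "(\<Sum>i\<in>UNIV. \<pi> i * (f i)\<^sup>2) = 1"
      using inner_weighted[of f f] orth[of k1 k1] by (simp add: b1 power2_eq_square mult.assoc)
    show "(\<Sum>i\<in>UNIV. \<Sum>j\<in>UNIV. \<pi> i * P$i$j * f i * f j) = lambda2 P"
      using inner_weighted_sym_P[of f f] orth[of k1 k1] eig[of k1] \<open>\<mu> k1 = lambda2 P\<close> by (simp add: b1)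
  qed
qed

lemma abs_lambda2_le_1:
  assumes "CARD('n) \<ge> 2"
  shows "\<bar>lambda2 P\<bar> \<le> 1"
proof -
  obtain f where norm: "(\<Sum>i\<in>UNIV. \<pi> i * (f i)\<^sup>2) = 1"
    and quad: "(\<Sum>i\<in>UNIV. \<Sum>j\<in>UNIV. \<pi> i * P$i$j * f i * f j) = lambda2 P"
    using lambda2_attained[OF assms] by blast
  show ?thesis using abs_quadratic_form_le[of f] unfolding norm quad .
qed

lemma lambda2_variational_euclidean:
  fixes \<Psi> :: "'n \<Rightarrow> 'a::euclidean_space"
  assumes "CARD('n) \<ge> 2" and mean: "(\<Sum>k\<in>UNIV. \<pi> k *\<^sub>R \<Psi> k) = 0"
  shows "(\<Sum>i\<in>UNIV. \<Sum>j\<in>UNIV. \<pi> i * P$i$j * (\<Psi> i \<bullet> \<Psi> j))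
    \<le> lambda2 P * (\<Sum>k\<in>UNIV. \<pi> k * (norm (\<Psi> k))\<^sup>2)"
proof -
  have "(\<Sum>i\<in>UNIV. \<Sum>j\<in>UNIV. \<pi> i * P$i$j * (\<Psi> i \<bullet> \<Psi> j))
      = (\<Sum>i\<in>UNIV. \<Sum>j\<in>UNIV. \<Sum>e\<in>Basis. \<pi> i * P$i$j * (\<Psi> i \<bullet> e) * (\<Psi> j \<bullet> e))"
    by (intro sum.cong refl) (subst euclidean_inner, simp add: sum_distrib_left mult.assoc)
  also have "\<dots> = (\<Sum>i\<in>UNIV. \<Sum>e\<in>Basis. \<Sum>j\<in>UNIV. \<pi> i * P$i$j * (\<Psi> i \<bullet> e) * (\<Psi> j \<bullet> e))"
    by (rule sum.cong[OF refl], rule sum.swap)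
  also have "\<dots> = (\<Sum>e\<in>Basis. \<Sum>i\<in>UNIV. \<Sum>j\<in>UNIV. \<pi> i * P$i$j * (\<Psi> i \<bullet> e) * (\<Psi> j \<bullet> e))"
    by (rule sum.swap)
  also have "\<dots> \<le> (\<Sum>e\<in>Basis. lambda2 P * (\<Sum>i\<in>UNIV. \<pi> i * (\<Psi> i \<bullet> e)\<^sup>2))"
  proof (rule sum_mono)
    fix e :: 'a
    have "(\<Sum>i\<in>UNIV. \<pi> i * (\<Psi> i \<bullet> e)) = (\<Sum>k\<in>UNIV. \<pi> k *\<^sub>R \<Psi> k) \<bullet> e"
      by (simp add: inner_sum_left)
    with mean show "(\<Sum>i\<in>UNIV. \<Sum>j\<in>UNIV. \<pi> i * P$i$j * (\<Psi> i \<bullet> e) * (\<Psi> j \<bullet> e))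
        \<le> lambda2 P * (\<Sum>i\<in>UNIV. \<pi> i * (\<Psi> i \<bullet> e)\<^sup>2)"
      by (intro lambda2_variational[OF assms(1)]) simp
  qed
  also have "\<dots> = lambda2 P * (\<Sum>e\<in>Basis. \<Sum>k\<in>UNIV. \<pi> k * (\<Psi> k \<bullet> e)\<^sup>2)"
    by (simp add: sum_distrib_left)
  also have "\<dots> = lambda2 P * (\<Sum>k\<in>UNIV. \<pi> k * (norm (\<Psi> k))\<^sup>2)"
    by (subst sum.swap, intro arg_cong[where f = "(*) _"] sum.cong refl)
       (subst power2_norm_eq_inner, subst euclidean_inner, simp add: power2_eq_square sum_distrib_left)
  finally show ?thesis .
qed

lemma dirichlet_form_eq:
  fixes \<Psi> :: "'n \<Rightarrow> 'a::real_inner"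
  shows "(\<Sum>i\<in>UNIV. \<Sum>j\<in>UNIV. \<pi> i * P$i$j * (norm (\<Psi> i - \<Psi> j))\<^sup>2)
    = 2 * (\<Sum>k\<in>UNIV. \<pi> k * (norm (\<Psi> k))\<^sup>2) - 2 * (\<Sum>i\<in>UNIV. \<Sum>j\<in>UNIV. \<pi> i * P$i$j * (\<Psi> i \<bullet> \<Psi> j))"
proof -
  have "(\<Sum>i\<in>UNIV. \<Sum>j\<in>UNIV. \<pi> i * P$i$j * (norm (\<Psi> i - \<Psi> j))\<^sup>2)
      = (\<Sum>i\<in>UNIV. \<Sum>j\<in>UNIV. \<pi> i * P$i$j * (norm (\<Psi> i))\<^sup>2 + \<pi> i * P$i$j * (norm (\<Psi> j))\<^sup>2
          - 2 * (\<pi> i * P$i$j * (\<Psi> i \<bullet> \<Psi> j)))"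
    by (intro sum.cong refl)
       (simp add: power2_norm_eq_inner inner_commute algebra_simps)
  also have "\<dots> = 2 * (\<Sum>k\<in>UNIV. \<pi> k * (norm (\<Psi> k))\<^sup>2)
      - 2 * (\<Sum>i\<in>UNIV. \<Sum>j\<in>UNIV. \<pi> i * P$i$j * (\<Psi> i \<bullet> \<Psi> j))"
    by (simp add: sum.distrib sum_subtractf sum_flow_source sum_flow_target sum_distrib_left)
  finally show ?thesis .
qed

lemma poincare_inequality:
  fixes \<Psi> :: "'n \<Rightarrow> 'a::euclidean_space"
  assumes "CARD('n) \<ge> 2" and "(\<Sum>k\<in>UNIV. \<pi> k *\<^sub>R \<Psi> k) = 0"
  shows "2 * (1 - lambda2 P) * (\<Sum>k\<in>UNIV. \<pi> k * (norm (\<Psi> k))\<^sup>2)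
    \<le> (\<Sum>i\<in>UNIV. \<Sum>j\<in>UNIV. \<pi> i * P$i$j * (norm (\<Psi> i - \<Psi> j))\<^sup>2)"
  using lambda2_variational_euclidean[OF assms] unfolding dirichlet_form_eq by (simp add: algebra_simps)

end

section \<open>Weak and strong duality\<close>

lemma feasible_P_mat_1:
  assumes "\<And>i. (i, i) \<in> E"
  shows "feasible_P E \<pi> (mat 1)"
  using assms by (auto simp: feasible_P_def mat_def)

lemma slope_nonneg_if_bounded_below:
  fixes \<alpha> \<beta> \<gamma> :: real
  assumes "\<And>s. 0 \<le> s \<Longrightarrow> \<gamma> \<le> \<alpha> + s * \<beta>"
  shows "0 \<le> \<beta>"
proof (rule ccontr)
  assume "\<not> 0 \<le> \<beta>"
  hence "\<gamma> \<le> \<alpha> + ((\<bar>\<alpha>\<bar> + \<bar>\<gamma>\<bar> + 1) / - \<beta>) * \<beta>"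
    by (intro assms divide_nonneg_pos) auto
  with \<open>\<not> 0 \<le> \<beta>\<close> show False by simp
qed

lemma slope_zero_if_bounded_below:
  fixes \<alpha> \<beta> \<gamma> :: real
  assumes "\<And>s. \<gamma> \<le> \<alpha> + s * \<beta>"
  shows "\<beta> = 0"
proof -
  have "0 \<le> \<beta>" using assms by (rule slope_nonneg_if_bounded_below)
  moreover have "0 \<le> - \<beta>" using assms[of "- _"] by (intro slope_nonneg_if_bounded_below) simp
  ultimately show ?thesis by simp
qed

lemma linear_isometry_into_cart:
  fixes S :: "'a::euclidean_space set"
  assumes "subspace S" and "dim S \<le> CARD('n::finite)"
  obtains f :: "'a \<Rightarrow> real^'n" where "linear f" "\<And>x. x \<in> S \<Longrightarrow> norm (f x) = norm x"
proof -
  obtain T :: "(real^'n) set" where "subspace T" "dim T = dim S"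
    using choose_subspace_of_subspace[of "dim S" "UNIV :: (real^'n) set"] assms(2) by auto
  with assms(1) show thesis using isometry_subspaces that by metis
qed

text \<open>The dual problem with the roles of objective and normalisation exchanged: fix
  \<open>emb_obj \<pi> \<Psi> = 1\<close> and minimise \<open>\<Sum>i. \<pi> i * w$i\<close> (see \<open>rescale_to_feasible_emb\<close>).\<close>
definition normalized_emb :: "('n::finite \<Rightarrow> real) \<Rightarrow> ('n \<Rightarrow> real^'n) \<Rightarrow> bool" where
  "normalized_emb \<pi> \<Psi> \<longleftrightarrow> (\<Sum>k\<in>UNIV. \<pi> k *\<^sub>R \<Psi> k) = 0 \<and> emb_obj \<pi> \<Psi> = 1"

definition edge_slack :: "('n::finite \<times> 'n) set \<Rightarrow> ('n \<Rightarrow> real^'n) \<Rightarrow> real^'n \<Rightarrow> real^('n \<times> 'n)" where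
  "edge_slack E \<Psi> w =
     (\<chi> p. if p \<in> E then (norm (\<Psi> (fst p) - \<Psi> (snd p)))\<^sup>2 - w $ fst p - w $ snd p else 0)"

text \<open>The Gram-matrix argument: a convex combination of two embeddings is realised by their
  weighted concatenation, moved back into \<open>\<real>\<^sup>n\<close> by a linear isometry of its span.\<close>
lemma normalized_emb_mix:
  fixes \<Psi>1 \<Psi>2 :: "'n::finite \<Rightarrow> real^'n"
  assumes norm1: "normalized_emb \<pi> \<Psi>1" and norm2: "normalized_emb \<pi> \<Psi>2"
    and uv: "0 \<le> u" "0 \<le> v" "u + v = 1"
  obtains \<Phi> where "normalized_emb \<pi> \<Phi>"
    "\<And>i j. (norm (\<Phi> i - \<Phi> j))\<^sup>2 = u * (norm (\<Psi>1 i - \<Psi>1 j))\<^sup>2 + v * (norm (\<Psi>2 i - \<Psi>2 j))\<^sup>2"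
proof -
  define \<Theta> where "\<Theta> k = (sqrt u *\<^sub>R \<Psi>1 k, sqrt v *\<^sub>R \<Psi>2 k)" for k
  have norm_\<Theta>: "(norm (\<Theta> i - \<Theta> j))\<^sup>2 = u * (norm (\<Psi>1 i - \<Psi>1 j))\<^sup>2 + v * (norm (\<Psi>2 i - \<Psi>2 j))\<^sup>2"
    "(norm (\<Theta> k))\<^sup>2 = u * (norm (\<Psi>1 k))\<^sup>2 + v * (norm (\<Psi>2 k))\<^sup>2" for i j k
    using uv by (simp_all add: \<Theta>_def norm_Pair power_mult_distrib flip: scaleR_diff_right)
  have "(\<Sum>k\<in>UNIV. \<pi> k *\<^sub>R \<Theta> k)
      = (sqrt u *\<^sub>R (\<Sum>k\<in>UNIV. \<pi> k *\<^sub>R \<Psi>1 k), sqrt v *\<^sub>R (\<Sum>k\<in>UNIV. \<pi> k *\<^sub>R \<Psi>2 k))"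
    by (simp add: \<Theta>_def prod_eq_iff fst_sum snd_sum scaleR_sum_right mult.commute)
  hence mean_\<Theta>: "(\<Sum>k\<in>UNIV. \<pi> k *\<^sub>R \<Theta> k) = 0"
    using norm1 norm2 by (simp add: normalized_emb_def zero_prod_def)
  have "dim (span (range \<Theta>)) \<le> CARD('n)"
    using dim_le_card[of "range \<Theta>" "range \<Theta>"] card_image_le[of UNIV \<Theta>]
    by (simp add: span_superset)
  then obtain f :: "(real^'n) \<times> (real^'n) \<Rightarrow> real^'n"
    where f: "linear f" "\<And>x. x \<in> span (range \<Theta>) \<Longrightarrow> norm (f x) = norm x"
    using linear_isometry_into_cart[OF subspace_span] by blast
  define \<Phi> where "\<Phi> k = f (\<Theta> k)" for k
  have norm_\<Phi>: "norm (\<Phi> i - \<Phi> j) = norm (\<Theta> i - \<Theta> j)" "norm (\<Phi> k) = norm (\<Theta> k)" for i j k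
    using f(2)[of "\<Theta> i - \<Theta> j"] f(2)[of "\<Theta> k"]
    by (simp_all add: \<Phi>_def linear_diff[OF f(1)] span_diff span_base)
  have "normalized_emb \<pi> \<Phi>"
    unfolding normalized_emb_def
  proof
    have "(\<Sum>k\<in>UNIV. \<pi> k *\<^sub>R \<Phi> k) = f (\<Sum>k\<in>UNIV. \<pi> k *\<^sub>R \<Theta> k)"
      by (simp add: \<Phi>_def linear_sum[OF f(1)] linear_scale[OF f(1)])
    also have "\<dots> = 0" using mean_\<Theta> linear_0[OF f(1)] by simp
    finally show "(\<Sum>k\<in>UNIV. \<pi> k *\<^sub>R \<Phi> k) = 0" .
    show "emb_obj \<pi> \<Phi> = 1"
      using norm1 norm2 uv
      by (simp add: emb_obj_def normalized_emb_def norm_\<Phi> norm_\<Theta> sum.distrib algebra_simps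
          flip: sum_distrib_left)
  qed
  with that show thesis by (simp add: norm_\<Phi> norm_\<Theta>)
qed

lemma normalized_emb_line:
  assumes "norm e = 1" "(\<Sum>i\<in>UNIV. \<pi> i * f i) = 0" "(\<Sum>i\<in>UNIV. \<pi> i * (f i)\<^sup>2) = 1"
  shows "normalized_emb \<pi> (\<lambda>k. f k *\<^sub>R e)"
  using assms by (simp add: normalized_emb_def emb_obj_def power_mult_distrib flip: scaleR_sum_left)

lemma inner_edge_slack:
  fixes A :: "real^('n::finite \<times> 'n)"
  assumes "\<And>p. p \<notin> E \<Longrightarrow> A $ p = 0"
  shows "A \<bullet> edge_slack E \<Psi> w
    = (\<Sum>i\<in>UNIV. \<Sum>j\<in>UNIV. A $ (i, j) * ((norm (\<Psi> i - \<Psi> j))\<^sup>2 - w $ i - w $ j))"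
proof -
  have "A \<bullet> edge_slack E \<Psi> w
      = (\<Sum>p\<in>UNIV. A $ p * ((norm (\<Psi> (fst p) - \<Psi> (snd p)))\<^sup>2 - w $ fst p - w $ snd p))"
    unfolding inner_vec_def edge_slack_def by (intro sum.cong) (auto simp: assms)
  then show ?thesis
    by (simp add: sum.cartesian_product case_prod_beta UNIV_Times_UNIV[symmetric] del: UNIV_Times_UNIV)
qed

locale fastest_mixing =
  fixes E :: "('n::finite \<times> 'n) set" and \<pi> :: "'n \<Rightarrow> real"
  assumes two_states: "CARD('n) \<ge> 2"
    and E_sym: "\<And>i j. (i, j) \<in> E \<Longrightarrow> (j, i) \<in> E"
    and E_loops: "\<And>i. (i, i) \<in> E"
    and pi_pos: "\<And>i. 0 < \<pi> i" and pi_sum: "(\<Sum>i\<in>UNIV. \<pi> i) = 1"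
begin

lemma reversible_chain_if_feasible:
  assumes "feasible_P E \<pi> P"
  shows "reversible_chain \<pi> P"
proof
  show "\<pi> i * P$i$j = \<pi> j * P$j$i" for i j
    using assms E_sym[of i j] E_sym[of j i] by (cases "(i, j) \<in> E") (auto simp: feasible_P_def)
qed (use assms pi_pos pi_sum in \<open>auto simp: feasible_P_def\<close>)

lemma lambda2_star_le:
  assumes "feasible_P E \<pi> P"
  shows "lambda2_star E \<pi> \<le> lambda2 P"
proof -
  have "bdd_below {lambda2 P | P. feasible_P E \<pi> P}"
    using reversible_chain.abs_lambda2_le_1[OF reversible_chain_if_feasible two_states]
    by (force simp: bdd_below_def abs_le_iff)
  with assms show ?thesis unfolding lambda2_star_def by (auto intro: cInf_lower)
qed

lemma le_lambda2_star:
  assumes "\<And>P. feasible_P E \<pi> P \<Longrightarrow> x \<le> lambda2 P"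
  shows "x \<le> lambda2_star E \<pi>"
  unfolding lambda2_star_def using assms feasible_P_mat_1[OF E_loops]
  by (intro cInf_greatest) auto

lemma abs_lambda2_star_le_1: "\<bar>lambda2_star E \<pi>\<bar> \<le> 1"
proof -
  have abs_le: "\<bar>lambda2 P\<bar> \<le> 1" if "feasible_P E \<pi> P" for P
    using reversible_chain.abs_lambda2_le_1[OF reversible_chain_if_feasible[OF that] two_states] .
  have "-1 \<le> lambda2_star E \<pi>"
    using abs_le by (intro le_lambda2_star) (simp add: abs_le_iff)
  moreover have "lambda2_star E \<pi> \<le> 1"
    using lambda2_star_le abs_le feasible_P_mat_1[OF E_loops] by (force simp: abs_le_iff)
  ultimately show ?thesis by simp
qed

lemma feasible_emb_obj_le:
  assumes P: "feasible_P E \<pi> P" and emb: "feasible_emb E \<pi> w \<Psi>"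
  shows "(1 - lambda2 P) * emb_obj \<pi> \<Psi> \<le> 1"
proof -
  interpret reversible_chain \<pi> P by (rule reversible_chain_if_feasible[OF P])
  have "2 * (1 - lambda2 P) * emb_obj \<pi> \<Psi>
      \<le> (\<Sum>i\<in>UNIV. \<Sum>j\<in>UNIV. \<pi> i * P$i$j * (norm (\<Psi> i - \<Psi> j))\<^sup>2)"
    using poincare_inequality[OF two_states, of \<Psi>] emb by (simp add: feasible_emb_def emb_obj_def)
  also have "\<dots> \<le> (\<Sum>i\<in>UNIV. \<Sum>j\<in>UNIV. \<pi> i * P$i$j * w$i + \<pi> i * P$i$j * w$j)"
  proof (intro sum_mono)
    fix i j
    show "\<pi> i * P$i$j * (norm (\<Psi> i - \<Psi> j))\<^sup>2 \<le> \<pi> i * P$i$j * w$i + \<pi> i * P$i$j * w$j"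
    proof (cases "(i, j) \<in> E")
      case True
      hence "(norm (\<Psi> i - \<Psi> j))\<^sup>2 \<le> w$i + w$j" using emb by (simp add: feasible_emb_def)
      moreover have "0 \<le> \<pi> i * P$i$j" using pi_pos[of i] P_nonneg[of i j] by simp
      ultimately show ?thesis by (metis distrib_left mult_left_mono)
    qed (use P in \<open>simp add: feasible_P_def\<close>)
  qed
  also have "\<dots> = 2"
    using emb by (simp add: sum.distrib sum_flow_source sum_flow_target feasible_emb_def)
  finally show ?thesis by (simp add: algebra_simps)
qed

lemma weak_duality:
  assumes emb: "feasible_emb E \<pi> w \<Psi>"
  shows "ereal (emb_obj \<pi> \<Psi>) \<le> tau2_star E \<pi>"
proof (cases "lambda2_star E \<pi> = 1")
  case False
  hence lt1: "lambda2_star E \<pi> < 1" using abs_lambda2_star_le_1 by (simp add: abs_le_iff)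
  have "emb_obj \<pi> \<Psi> * (1 - lambda2_star E \<pi>) \<le> 1"
  proof (cases "emb_obj \<pi> \<Psi> > 0")
    case True
    have "1 - 1 / emb_obj \<pi> \<Psi> \<le> lambda2_star E \<pi>"
    proof (rule le_lambda2_star)
      fix P assume "feasible_P E \<pi> P"
      from feasible_emb_obj_le[OF this emb] True show "1 - 1 / emb_obj \<pi> \<Psi> \<le> lambda2 P"
        by (simp add: field_simps)
    qed
    with True show ?thesis by (simp add: field_simps)
  next
    case False
    with lt1 show ?thesis by (intro order_trans[OF mult_nonpos_nonneg]) auto
  qed
  with lt1 show ?thesis by (simp add: tau2_star_def field_simps)
qed (simp add: tau2_star_def)

lemma rescale_to_feasible_emb:
  assumes "normalized_emb \<pi> \<Psi>" and edge: "\<And>i j. (i, j) \<in> E \<Longrightarrow> (norm (\<Psi> i - \<Psi> j))\<^sup>2 \<le> w$i + w$j"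
    and cost: "(\<Sum>i\<in>UNIV. \<pi> i * w$i) \<le> c" and "0 < c"
  obtains w' \<Psi>' where "feasible_emb E \<pi> w' \<Psi>'" "emb_obj \<pi> \<Psi>' = 1 / c"
proof -
  define \<delta> where "\<delta> = c - (\<Sum>i\<in>UNIV. \<pi> i * w$i)"
  define w' :: "real^'n" where "w' = (\<chi> i. (w$i + \<delta>) / c)"
  define \<Psi>' where "\<Psi>' k = (1 / sqrt c) *\<^sub>R \<Psi> k" for k
  have sq: "(sqrt c)\<^sup>2 = c" using \<open>0 < c\<close> by simp
  have "feasible_emb E \<pi> w' \<Psi>'"
    unfolding feasible_emb_def
  proof (intro conjI allI impI)
    fix i j assume "(i, j) \<in> E"
    hence "(norm (\<Psi> i - \<Psi> j))\<^sup>2 \<le> (w$i + \<delta>) + (w$j + \<delta>)"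
      using edge[OF \<open>(i, j) \<in> E\<close>] cost by (simp add: \<delta>_def)
    hence "(norm (\<Psi> i - \<Psi> j))\<^sup>2 / c \<le> (w$i + \<delta>) / c + (w$j + \<delta>) / c"
      using \<open>0 < c\<close> by (simp add: divide_right_mono flip: add_divide_distrib)
    thus "(norm (\<Psi>' i - \<Psi>' j))\<^sup>2 \<le> w'$i + w'$j"
      using sq by (simp add: \<Psi>'_def w'_def power_mult_distrib power_divide flip: scaleR_diff_right)
  next
    have "(\<Sum>k\<in>UNIV. \<pi> k *\<^sub>R \<Psi>' k) = (1 / sqrt c) *\<^sub>R (\<Sum>k\<in>UNIV. \<pi> k *\<^sub>R \<Psi> k)"
      by (simp add: \<Psi>'_def scaleR_sum_right)
    then show "(\<Sum>k\<in>UNIV. \<pi> k *\<^sub>R \<Psi>' k) = 0"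
      using assms(1) by (simp add: normalized_emb_def)
  next
    have "(\<Sum>i\<in>UNIV. \<pi> i * w'$i) = ((\<Sum>i\<in>UNIV. \<pi> i * w$i) + \<delta> * (\<Sum>i\<in>UNIV. \<pi> i)) / c"
      by (simp add: w'_def sum_divide_distrib[symmetric] distrib_left sum.distrib sum_distrib_left
          sum_distrib_right mult.commute)
    also have "\<dots> = 1" using \<open>0 < c\<close> by (simp add: pi_sum \<delta>_def)
    finally show "(\<Sum>i\<in>UNIV. \<pi> i * w'$i) = 1" .
  qed
  moreover have "emb_obj \<pi> \<Psi>' = emb_obj \<pi> \<Psi> / c"
    using sq by (simp add: emb_obj_def \<Psi>'_def power_mult_distrib power_divide sum_divide_distrib)
  ultimately show thesis using assms(1) that by (simp add: normalized_emb_def)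
qed

lemma normalized_emb_exists: "\<exists>\<Psi>. normalized_emb \<pi> \<Psi>"
proof -
  interpret reversible_chain \<pi> "mat 1"
    by (rule reversible_chain_if_feasible[OF feasible_P_mat_1[OF E_loops]])
  obtain f where "(\<Sum>i\<in>UNIV. \<pi> i * f i) = 0" "(\<Sum>i\<in>UNIV. \<pi> i * (f i)\<^sup>2) = 1"
    using lambda2_attained[OF two_states] by blast
  moreover obtain e :: "real^'n" where "norm e = 1" using vector_choose_size[of 1] by auto
  ultimately show ?thesis using normalized_emb_line by blast
qed

definition slack_set :: "((real^('n \<times> 'n)) \<times> real) set" where
  "slack_set = {(z, t). \<exists>\<Psi> w. normalized_emb \<pi> \<Psi> \<and>
     (\<forall>p\<in>E. edge_slack E \<Psi> w $ p \<le> z $ p) \<and> (\<Sum>i\<in>UNIV. \<pi> i * w$i) \<le> t}"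

lemma slack_setI:
  assumes "normalized_emb \<pi> \<Psi>" "\<And>p. p \<in> E \<Longrightarrow> 0 \<le> y $ p" "0 \<le> s"
  shows "(edge_slack E \<Psi> w + y, (\<Sum>i\<in>UNIV. \<pi> i * w$i) + s) \<in> slack_set"
  unfolding slack_set_def using assms by (auto intro!: exI[of _ \<Psi>] exI[of _ w])

lemma convex_slack_set: "convex slack_set"
  unfolding convex_def
proof (intro ballI allI impI)
  fix x1 x2 :: "(real^('n \<times> 'n)) \<times> real" and u v :: real
  assume "x1 \<in> slack_set" "x2 \<in> slack_set" and uv: "0 \<le> u" "0 \<le> v" "u + v = 1"
  then obtain \<Psi>1 w1 \<Psi>2 w2 where norm1: "normalized_emb \<pi> \<Psi>1" and norm2: "normalized_emb \<pi> \<Psi>2"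
    and slack1: "\<forall>p\<in>E. edge_slack E \<Psi>1 w1 $ p \<le> fst x1 $ p" "(\<Sum>i\<in>UNIV. \<pi> i * w1$i) \<le> snd x1"
    and slack2: "\<forall>p\<in>E. edge_slack E \<Psi>2 w2 $ p \<le> fst x2 $ p" "(\<Sum>i\<in>UNIV. \<pi> i * w2$i) \<le> snd x2"
    unfolding slack_set_def by auto
  obtain \<Phi> where "normalized_emb \<pi> \<Phi>"
    and norm_\<Phi>: "\<And>i j. (norm (\<Phi> i - \<Phi> j))\<^sup>2
      = u * (norm (\<Psi>1 i - \<Psi>1 j))\<^sup>2 + v * (norm (\<Psi>2 i - \<Psi>2 j))\<^sup>2"
    using normalized_emb_mix[OF norm1 norm2 uv] by blast
  define w where "w = u *\<^sub>R w1 + v *\<^sub>R w2"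
  have "\<forall>p\<in>E. edge_slack E \<Phi> w $ p \<le> fst (u *\<^sub>R x1 + v *\<^sub>R x2) $ p"
  proof
    fix p assume "p \<in> E"
    have "edge_slack E \<Phi> w $ p = u * edge_slack E \<Psi>1 w1 $ p + v * edge_slack E \<Psi>2 w2 $ p"
      using \<open>p \<in> E\<close> uv by (simp add: edge_slack_def norm_\<Phi> w_def algebra_simps)
    also have "\<dots> \<le> u * fst x1 $ p + v * fst x2 $ p"
      using slack1(1) slack2(1) \<open>p \<in> E\<close> uv by (intro add_mono mult_left_mono) auto
    finally show "edge_slack E \<Phi> w $ p \<le> fst (u *\<^sub>R x1 + v *\<^sub>R x2) $ p" by simp
  qed
  moreover have "(\<Sum>i\<in>UNIV. \<pi> i * w$i) \<le> snd (u *\<^sub>R x1 + v *\<^sub>R x2)"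
  proof -
    have "(\<Sum>i\<in>UNIV. \<pi> i * w$i) = u * (\<Sum>i\<in>UNIV. \<pi> i * w1$i) + v * (\<Sum>i\<in>UNIV. \<pi> i * w2$i)"
      by (simp add: w_def sum.distrib sum_distrib_left algebra_simps)
    also have "\<dots> \<le> u * snd x1 + v * snd x2"
      using slack1(2) slack2(2) uv by (intro add_mono mult_left_mono) auto
    finally show ?thesis by simp
  qed
  ultimately show "u *\<^sub>R x1 + v *\<^sub>R x2 \<in> slack_set"
    using \<open>normalized_emb \<pi> \<Phi>\<close> unfolding slack_set_def by (cases "u *\<^sub>R x1 + v *\<^sub>R x2") auto
qed

end

lemma sum_pairs_endpoints:
  fixes A :: "'n::finite \<times> 'n \<Rightarrow> real"
  shows "(\<Sum>i\<in>UNIV. \<Sum>j\<in>UNIV. A (i, j) * (w i + w j))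
    = (\<Sum>k\<in>UNIV. w k * ((\<Sum>j\<in>UNIV. A (k, j)) + (\<Sum>i\<in>UNIV. A (i, k))))"
proof -
  have "(\<Sum>i\<in>UNIV. \<Sum>j\<in>UNIV. A (i, j) * w j) = (\<Sum>k\<in>UNIV. w k * (\<Sum>i\<in>UNIV. A (i, k)))"
    by (subst sum.swap) (simp add: sum_distrib_left mult.commute)
  then show ?thesis
    by (simp add: distrib_left distrib_right sum.distrib sum_distrib_left mult.commute)
qed

text \<open>A hyperplane \<open>A \<bullet> z + \<beta> t = \<beta> c\<close> supporting the slack set. Testing it against the
  recession directions of the slack set forces \<open>(A, \<beta>)\<close> to encode a reversible chain.\<close>
locale slack_functional = fastest_mixing E \<pi> for E :: "('n::finite \<times> 'n) set" and \<pi> +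
  fixes A :: "real^('n \<times> 'n)" and \<beta> c :: real
  assumes supports: "\<And>z t. (z, t) \<in> slack_set \<Longrightarrow> \<beta> * c \<le> A \<bullet> z + \<beta> * t"
    and nontrivial: "A \<noteq> 0 \<or> \<beta> \<noteq> 0"
begin

definition \<Psi>0 :: "'n \<Rightarrow> real^'n" where
  "\<Psi>0 = (SOME \<Psi>. normalized_emb \<pi> \<Psi>)"

lemma normalized_\<Psi>0: "normalized_emb \<pi> \<Psi>0"
  unfolding \<Psi>0_def using normalized_emb_exists by (rule someI_ex)

lemma supports_normalized:
  assumes "normalized_emb \<pi> \<Psi>" "\<And>p. p \<in> E \<Longrightarrow> 0 \<le> y $ p" "0 \<le> s"
  shows "\<beta> * c \<le> A \<bullet> (edge_slack E \<Psi> w + y) + \<beta> * ((\<Sum>i\<in>UNIV. \<pi> i * w$i) + s)"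
  by (rule supports[OF slack_setI[OF assms]])

lemma beta_nonneg: "0 \<le> \<beta>"
proof (rule slope_nonneg_if_bounded_below)
  fix s :: real assume "0 \<le> s"
  from supports_normalized[OF normalized_\<Psi>0 _ this, of 0 0]
  show "\<beta> * c \<le> A \<bullet> edge_slack E \<Psi>0 0 + s * \<beta>" by (simp add: mult.commute)
qed

lemma A_zero: "p \<notin> E \<Longrightarrow> A $ p = 0"
proof (rule slope_zero_if_bounded_below)
  fix s :: real assume "p \<notin> E"
  hence "\<And>q. q \<in> E \<Longrightarrow> 0 \<le> (s *\<^sub>R axis p 1 :: real^('n \<times> 'n)) $ q" by (auto simp: axis_def)
  from supports_normalized[OF normalized_\<Psi>0 this order_refl, of 0]
  show "\<beta> * c \<le> A \<bullet> edge_slack E \<Psi>0 0 + s * A $ p" by (simp add: inner_add_right inner_axis)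
qed

lemma A_nonneg: "0 \<le> A $ p"
proof (cases "p \<in> E")
  case True
  show ?thesis
  proof (rule slope_nonneg_if_bounded_below)
    fix s :: real assume "0 \<le> s"
    hence "\<And>q. q \<in> E \<Longrightarrow> 0 \<le> (s *\<^sub>R axis p 1 :: real^('n \<times> 'n)) $ q" by (simp add: axis_def)
    from supports_normalized[OF normalized_\<Psi>0 this order_refl, of 0]
    show "\<beta> * c \<le> A \<bullet> edge_slack E \<Psi>0 0 + s * A $ p" by (simp add: inner_add_right inner_axis)
  qed
qed (simp add: A_zero)

lemma degree_eq: "\<beta> * \<pi> k = (\<Sum>j\<in>UNIV. A $ (k, j)) + (\<Sum>i\<in>UNIV. A $ (i, k))"
proof -
  define R where "R = (\<Sum>j\<in>UNIV. A $ (k, j)) + (\<Sum>i\<in>UNIV. A $ (i, k))"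
  have "\<beta> * \<pi> k - R = 0"
  proof (rule slope_zero_if_bounded_below)
    fix s :: real
    define w :: "real^'n" where "w = s *\<^sub>R axis k 1"
    have w: "w$i * x = (if i = k then s * x else 0)" for i x by (simp add: w_def axis_def)
    have "A \<bullet> edge_slack E \<Psi>0 w = A \<bullet> edge_slack E \<Psi>0 0 - (\<Sum>i\<in>UNIV. \<Sum>j\<in>UNIV. A $ (i, j) * (w$i + w$j))"
      by (simp add: inner_edge_slack A_zero algebra_simps sum_subtractf)
    also have "(\<Sum>i\<in>UNIV. \<Sum>j\<in>UNIV. A $ (i, j) * (w$i + w$j)) = s * R"
      by (subst sum_pairs_endpoints[of "\<lambda>p. A $ p" "\<lambda>i. w $ i"]) (simp add: w R_def)
    finally have "A \<bullet> edge_slack E \<Psi>0 w = A \<bullet> edge_slack E \<Psi>0 0 - s * R" .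
    moreover have "(\<Sum>i\<in>UNIV. \<pi> i * w$i) = s * \<pi> k"
      by (simp add: w mult.commute[of "\<pi> _"])
    moreover note supports_normalized[OF normalized_\<Psi>0 _ order_refl, of 0 w]
    ultimately show "\<beta> * c \<le> A \<bullet> edge_slack E \<Psi>0 0 + s * (\<beta> * \<pi> k - R)"
      by (simp add: algebra_simps)
  qed
  then show ?thesis by (simp add: R_def)
qed

lemma beta_pos: "0 < \<beta>"
proof (rule ccontr)
  assume "\<not> 0 < \<beta>"
  hence "\<beta> = 0" using beta_nonneg by simp
  have "A $ (i, j) = 0" for i j
  proof -
    have "A $ (i, j) \<le> (\<Sum>j\<in>UNIV. A $ (i, j)) + (\<Sum>k\<in>UNIV. A $ (k, i))"
      by (intro add_increasing2 sum_nonneg member_le_sum) (auto simp: A_nonneg)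
    also have "\<dots> = 0" using degree_eq[of i] \<open>\<beta> = 0\<close> by simp
    finally show ?thesis using A_nonneg[of "(i, j)"] by simp
  qed
  hence "A = 0" by (simp add: vec_eq_iff)
  with nontrivial \<open>\<beta> = 0\<close> show False by simp
qed

definition induced_chain :: "real^'n^'n" where
  "induced_chain = (\<chi> i j. (A $ (i, j) + A $ (j, i)) / (\<beta> * \<pi> i))"

lemma induced_chain_flow: "\<beta> * \<pi> i * induced_chain $ i $ j = A $ (i, j) + A $ (j, i)"
  using beta_pos pi_pos[of i] by (simp add: induced_chain_def)

lemma feasible_induced_chain: "feasible_P E \<pi> induced_chain"
  unfolding feasible_P_def
proof (intro conjI allI impI)
  show "0 \<le> induced_chain $ i $ j" for i j
    using beta_pos pi_pos[of i] A_nonneg by (simp add: induced_chain_def)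
  show "induced_chain $ i $ j = 0" if "(i, j) \<notin> E" for i j
  proof -
    have "(j, i) \<notin> E" using that E_sym by blast
    with that show ?thesis by (simp add: induced_chain_def A_zero)
  qed
  show "(\<Sum>j\<in>UNIV. induced_chain $ i $ j) = 1" for i
  proof -
    have "(\<Sum>j\<in>UNIV. induced_chain $ i $ j) = ((\<Sum>j\<in>UNIV. A $ (i, j)) + (\<Sum>j\<in>UNIV. A $ (j, i))) / (\<beta> * \<pi> i)"
      by (simp add: induced_chain_def sum.distrib flip: sum_divide_distrib)
    also have "\<dots> = 1" using degree_eq[of i, symmetric] beta_pos pi_pos[of i] by simp
    finally show ?thesis .
  qed
  show "\<pi> i * induced_chain $ i $ j = \<pi> j * induced_chain $ j $ i" for i j
  proof -
    have "\<beta> * (\<pi> i * induced_chain $ i $ j) = \<beta> * (\<pi> j * induced_chain $ j $ i)"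
      using induced_chain_flow[of i j] induced_chain_flow[of j i] by (simp add: mult.assoc add.commute)
    thus ?thesis using beta_pos by simp
  qed
qed

lemma c_le_spectral_gap: "c \<le> 1 - lambda2 induced_chain"
proof -
  interpret induced: reversible_chain \<pi> induced_chain
    by (rule reversible_chain_if_feasible[OF feasible_induced_chain])
  obtain f where f: "(\<Sum>i\<in>UNIV. \<pi> i * f i) = 0" "(\<Sum>i\<in>UNIV. \<pi> i * (f i)\<^sup>2) = 1"
    "(\<Sum>i\<in>UNIV. \<Sum>j\<in>UNIV. \<pi> i * induced_chain $ i $ j * f i * f j) = lambda2 induced_chain"
    using induced.lambda2_attained[OF two_states] by blast
  obtain e :: "real^'n" where e: "norm e = 1" using vector_choose_size[of 1] by auto
  have "\<beta> * c \<le> A \<bullet> edge_slack E (\<lambda>k. f k *\<^sub>R e) 0"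
    using supports_normalized[OF normalized_emb_line[OF e f(1,2)] _ order_refl, of 0 0] by simp
  also have "\<dots> = (\<Sum>i\<in>UNIV. \<Sum>j\<in>UNIV. A $ (i, j) * (f i - f j)\<^sup>2)"
    using e by (simp add: inner_edge_slack A_zero power_mult_distrib flip: scaleR_diff_left)
  also have "\<dots> = (\<Sum>i\<in>UNIV. \<Sum>j\<in>UNIV. (A $ (i, j) + A $ (j, i)) * (f i - f j)\<^sup>2) / 2"
  proof -
    have "(\<Sum>i\<in>UNIV. \<Sum>j\<in>UNIV. A $ (j, i) * (f i - f j)\<^sup>2)
        = (\<Sum>i\<in>UNIV. \<Sum>j\<in>UNIV. A $ (i, j) * (f i - f j)\<^sup>2)"
      by (subst sum.swap) (simp add: power2_commute)
    then show ?thesis by (simp add: distrib_right sum.distrib)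
  qed
  also have "\<dots> = \<beta> * (\<Sum>i\<in>UNIV. \<Sum>j\<in>UNIV. \<pi> i * induced_chain $ i $ j * (norm (f i - f j))\<^sup>2) / 2"
    by (simp add: sum_distrib_left mult.assoc flip: induced_chain_flow)
  also have "\<dots> = \<beta> * (1 - lambda2 induced_chain)"
  proof -
    have "(\<Sum>i\<in>UNIV. \<Sum>j\<in>UNIV. \<pi> i * induced_chain $ i $ j * (norm (f i - f j))\<^sup>2) = 2 - 2 * lambda2 induced_chain"
      using induced.dirichlet_form_eq[of f] f by (simp add: mult.assoc)
    then show ?thesis by simp
  qed
  finally show ?thesis using beta_pos by simp
qed

end

context fastest_mixing
begin

lemma normalized_emb_cost_below:
  assumes "1 - lambda2_star E \<pi> < c"
  obtains \<Psi> w where "normalized_emb \<pi> \<Psi>"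
    "\<And>i j. (i, j) \<in> E \<Longrightarrow> (norm (\<Psi> i - \<Psi> j))\<^sup>2 \<le> w$i + w$j" "(\<Sum>i\<in>UNIV. \<pi> i * w$i) \<le> c"
proof -
  have "(0, c) \<in> slack_set"
  proof (rule ccontr)
    assume "(0, c) \<notin> slack_set"
    moreover have "slack_set \<noteq> {}"
    proof -
      obtain \<Psi> where "normalized_emb \<pi> \<Psi>" using normalized_emb_exists by blast
      from slack_setI[OF this, of 0 0 0] show ?thesis by auto
    qed
    ultimately obtain A \<beta> b where "(A, \<beta>) \<noteq> 0" "(A, \<beta>) \<bullet> (0, c) \<le> b"
      "\<And>x. x \<in> slack_set \<Longrightarrow> b \<le> (A, \<beta>) \<bullet> x"
      using separating_hyperplane_sets[OF convex_singleton convex_slack_set, of "(0, c)"] by fastforce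
    then interpret slack_functional E \<pi> A \<beta> c
      by unfold_locales (fastforce simp: zero_prod_def)+
    have "lambda2_star E \<pi> \<le> lambda2 induced_chain" by (rule lambda2_star_le[OF feasible_induced_chain])
    with c_le_spectral_gap assms show False by simp
  qed
  then obtain \<Psi> w where "normalized_emb \<pi> \<Psi>" "\<forall>p\<in>E. edge_slack E \<Psi> w $ p \<le> 0"
    "(\<Sum>i\<in>UNIV. \<pi> i * w$i) \<le> c"
    by (auto simp: slack_set_def)
  then show thesis
    using that[of \<Psi> w] by (fastforce simp: edge_slack_def)
qed

text \<open>Pairs \<open>(w, \<Psi>)\<close> with \<open>\<Psi>\<close> stored as the matrix of its rows, so that the sublevel sets of the
  cost live in a Euclidean space.\<close>
definition normalized_emb_sublevel :: "real \<Rightarrow> ((real^'n) \<times> (real^'n^'n)) set" where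
  "normalized_emb_sublevel c = {x. normalized_emb \<pi> (($) (snd x)) \<and>
     (\<forall>i j. (i, j) \<in> E \<longrightarrow> (norm (snd x $ i - snd x $ j))\<^sup>2 \<le> fst x $ i + fst x $ j) \<and>
     (\<Sum>i\<in>UNIV. \<pi> i * fst x $ i) \<le> c}"

lemma compact_normalized_emb_sublevel: "compact (normalized_emb_sublevel c)"
proof -
  have "closed (normalized_emb_sublevel c)"
    unfolding normalized_emb_sublevel_def normalized_emb_def emb_obj_def
    by (intro closed_Collect_conj closed_Collect_all closed_Collect_imp closed_Collect_eq
        closed_Collect_le open_Collect_const continuous_intros)
  moreover have "norm x \<le> (\<Sum>i\<in>UNIV. c / \<pi> i) + (\<Sum>k\<in>UNIV. sqrt (1 / \<pi> k))"
    if x: "x \<in> normalized_emb_sublevel c" for x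
  proof -
    have w_nonneg: "0 \<le> fst x $ i" for i
      using x E_loops[of i] by (force simp: normalized_emb_sublevel_def)
    have "\<pi> i * fst x $ i \<le> c" for i
    proof -
      have "\<pi> i * fst x $ i \<le> (\<Sum>i\<in>UNIV. \<pi> i * fst x $ i)"
        using w_nonneg by (intro member_le_sum) (simp_all add: less_imp_le[OF pi_pos])
      also have "\<dots> \<le> c" using x by (simp add: normalized_emb_sublevel_def)
      finally show ?thesis .
    qed
    hence "\<bar>fst x $ i\<bar> \<le> c / \<pi> i" for i
      using w_nonneg[of i] pi_pos[of i] by (simp add: field_simps)
    hence "norm (fst x) \<le> (\<Sum>i\<in>UNIV. c / \<pi> i)"
      by (intro order_trans[OF norm_le_l1_cart] sum_mono)
    moreover have row_bound: "norm (snd x $ k) \<le> sqrt (1 / \<pi> k)" for k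
    proof (rule real_le_rsqrt)
      have "\<pi> k * (norm (snd x $ k))\<^sup>2 \<le> (\<Sum>k\<in>UNIV. \<pi> k * (norm (snd x $ k))\<^sup>2)"
        by (intro member_le_sum) (simp_all add: less_imp_le[OF pi_pos])
      also have "\<dots> = 1"
        using x by (simp add: normalized_emb_sublevel_def normalized_emb_def emb_obj_def)
      finally show "(norm (snd x $ k))\<^sup>2 \<le> 1 / \<pi> k" using pi_pos[of k] by (simp add: field_simps)
    qed
    hence "norm (snd x) \<le> (\<Sum>k\<in>UNIV. sqrt (1 / \<pi> k))"
      unfolding norm_vec_def[of "snd x"]
      by (intro order_trans[OF L2_set_le_sum] sum_mono) (simp_all add: row_bound)
    ultimately show ?thesis using norm_Pair_le[of "fst x" "snd x"] by simp
  qed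
  hence "bounded (normalized_emb_sublevel c)" unfolding bounded_iff by blast
  ultimately show ?thesis by (simp add: compact_eq_bounded_closed)
qed

lemma normalized_emb_optimal:
  obtains \<Psi> w where "normalized_emb \<pi> \<Psi>"
    "\<And>i j. (i, j) \<in> E \<Longrightarrow> (norm (\<Psi> i - \<Psi> j))\<^sup>2 \<le> w$i + w$j"
    "(\<Sum>i\<in>UNIV. \<pi> i * w$i) \<le> 1 - lambda2_star E \<pi>"
proof -
  define F where "F = normalized_emb_sublevel (2 - lambda2_star E \<pi>)"
  let ?cost = "\<lambda>x. \<Sum>i\<in>UNIV. \<pi> i * fst x $ i"
  have below: "\<exists>x\<in>F. ?cost x \<le> c"
    if c_gt: "1 - lambda2_star E \<pi> < c" and c_le: "c \<le> 2 - lambda2_star E \<pi>" for c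
  proof -
    obtain \<Psi> w where "normalized_emb \<pi> \<Psi>" "\<And>i j. (i, j) \<in> E \<Longrightarrow> (norm (\<Psi> i - \<Psi> j))\<^sup>2 \<le> w$i + w$j"
      "(\<Sum>i\<in>UNIV. \<pi> i * w$i) \<le> c"
      using normalized_emb_cost_below[OF c_gt] by blast
    with c_le show ?thesis
      by (intro bexI[of _ "(w, \<chi> k. \<Psi> k)"]) (auto simp: F_def normalized_emb_sublevel_def vec_lambda_inverse)
  qed
  have "\<exists>x\<in>F. \<forall>y\<in>F. ?cost x \<le> ?cost y"
    using below[of "2 - lambda2_star E \<pi>"]
    by (intro continuous_attains_inf continuous_intros) (auto simp: F_def compact_normalized_emb_sublevel)
  then obtain x where "x \<in> F" and x_min: "\<And>y. y \<in> F \<Longrightarrow> ?cost x \<le> ?cost y"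
    by blast
  have "?cost x \<le> 1 - lambda2_star E \<pi>"
  proof (rule field_le_epsilon)
    fix e :: real assume "0 < e"
    then obtain y where "y \<in> F" "?cost y \<le> 1 - lambda2_star E \<pi> + min e 1"
      using below[of "1 - lambda2_star E \<pi> + min e 1"] by auto
    with x_min show "?cost x \<le> 1 - lambda2_star E \<pi> + e"
      by (meson min.cobounded1 add_left_mono order_trans)
  qed
  with \<open>x \<in> F\<close> show thesis
    using that[of "($) (snd x)" "fst x"] by (auto simp: F_def normalized_emb_sublevel_def)
qed

lemma feasible_emb_with_obj:
  assumes "1 - lambda2_star E \<pi> \<le> c" and "0 < c"
  obtains w \<Psi> where "feasible_emb E \<pi> w \<Psi>" "emb_obj \<pi> \<Psi> = 1 / c"
proof -
  obtain \<Psi> w where opt: "normalized_emb \<pi> \<Psi>"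
    "\<And>i j. (i, j) \<in> E \<Longrightarrow> (norm (\<Psi> i - \<Psi> j))\<^sup>2 \<le> w$i + w$j"
    "(\<Sum>i\<in>UNIV. \<pi> i * w$i) \<le> 1 - lambda2_star E \<pi>"
    using normalized_emb_optimal by blast
  show thesis
    using rescale_to_feasible_emb[OF opt(1,2) order_trans[OF opt(3) assms(1)] assms(2)] that by blast
qed

lemma strong_duality:
  "tau2_star E \<pi> = (SUP p\<in>{(w, \<Psi>). feasible_emb E \<pi> w \<Psi>}. ereal (emb_obj \<pi> (snd p)))"
  (is "_ = ?SUP")
proof -
  have SUP_ge: "ereal (1 / c) \<le> ?SUP" if c_ge: "1 - lambda2_star E \<pi> \<le> c" and c_pos: "0 < c" for c
  proof -
    obtain w \<Psi> where "feasible_emb E \<pi> w \<Psi>" "emb_obj \<pi> \<Psi> = 1 / c"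
      using feasible_emb_with_obj[OF c_ge c_pos] by blast
    then show ?thesis by (intro SUP_upper2[of "(w, \<Psi>)"]) auto
  qed
  show ?thesis
  proof (cases "lambda2_star E \<pi> = 1")
    case True
    have "ereal r \<le> ?SUP" for r
    proof -
      have "ereal r \<le> ereal (\<bar>r\<bar> + 1)" by simp
      also have "\<dots> \<le> ?SUP" using SUP_ge[of "1 / (\<bar>r\<bar> + 1)"] True by simp
      finally show ?thesis .
    qed
    hence "?SUP = \<infinity>" by (rule ereal_top)
    with True show ?thesis by (simp add: tau2_star_def)
  next
    case False
    hence "0 < 1 - lambda2_star E \<pi>" using abs_lambda2_star_le_1 by (simp add: abs_le_iff)
    hence "tau2_star E \<pi> \<le> ?SUP" using SUP_ge by (simp add: tau2_star_def divide_inverse)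
    moreover have "?SUP \<le> tau2_star E \<pi>" using weak_duality by (auto intro: SUP_least)
    ultimately show ?thesis by simp
  qed
qed

lemma tau2_star_attained:
  assumes "tau2_star E \<pi> \<noteq> \<infinity>"
  shows "\<exists>w \<Psi>. feasible_emb E \<pi> w \<Psi> \<and> ereal (emb_obj \<pi> \<Psi>) = tau2_star E \<pi>"
proof -
  have "lambda2_star E \<pi> \<noteq> 1"
  proof
    assume "lambda2_star E \<pi> = 1"
    with assms show False by (simp add: tau2_star_def)
  qed
  hence gap: "0 < 1 - lambda2_star E \<pi>" using abs_lambda2_star_le_1 by (simp add: abs_le_iff)
  then obtain w \<Psi> where "feasible_emb E \<pi> w \<Psi>" "emb_obj \<pi> \<Psi> = 1 / (1 - lambda2_star E \<pi>)"
    using feasible_emb_with_obj[OF order_refl] by blast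
  with gap show ?thesis by (intro exI[of _ w] exI[of _ \<Psi>]) (simp add: tau2_star_def divide_inverse)
qed

end

theorem proposition1:
  fixes E :: "('n::finite \<times> 'n) set" and \<pi> :: "'n \<Rightarrow> real"
  assumes "CARD('n) \<ge> 2"
    and "\<forall>i j. (i, j) \<in> E \<longrightarrow> (j, i) \<in> E"
    and "\<forall>i. (i, i) \<in> E"
    and "\<forall>i. \<pi> i > 0"
    and "(\<Sum>i\<in>UNIV. \<pi> i) = 1"
  shows "(\<forall>w \<Psi>. feasible_emb E \<pi> w \<Psi> \<longrightarrow> ereal (emb_obj \<pi> \<Psi>) \<le> tau2_star E \<pi>)
    \<and> tau2_star E \<pi> = (SUP p\<in>{(w, \<Psi>). feasible_emb E \<pi> w \<Psi>}. ereal (emb_obj \<pi> (snd p)))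
    \<and> (tau2_star E \<pi> \<noteq> \<infinity> \<longrightarrow>
         (\<exists>w \<Psi>. feasible_emb E \<pi> w \<Psi> \<and> ereal (emb_obj \<pi> \<Psi>) = tau2_star E \<pi>))"
proof -
  interpret fastest_mixing E \<pi> using assms by unfold_locales auto
  show ?thesis using weak_duality strong_duality tau2_star_attained by blast
qed

end
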